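(* Let $n\ge1$ and consider a classification problem with $m$ classes, where class $c\in\{1,\dots,m\}$ is described by a bounded probability density $\rho_c$ on $[0,1]^n$ (with respect to Lebesgue measure). Let $\mathcal{C}:[0,1]^n\to\{1,\dots,m\}$ be a classifier with measurable level sets. Let $U_c=\sup_x\rho_c(x)$ and $f_c=\mathrm{vol}\{x\in[0,1]^n:\mathcal{C}(x)=c\}$. Choose a class $c$ with $f_c\le\frac12$ and $\epsilon\ge0$, and let $x$ be a random point with density $\rho_c$. Then with probability at least $$1-2U_c\exp(-\epsilon^2/n)$$ at least one of the following holds: (1) $\mathcal{C}(x)\neq c$; or (2) there exists $\hat x\in[0,1]^n$ with $\mathcal{C}(\hat x)\ne c$ and $\|x-\hat x\|_0\le\epsilon$, i.e. $\hat x$ is obtained from $x$ by modifying at most $\epsilon$ coordinates (pixels) while staying in the unit hypercube.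
   Context: $\|z\|_0=\#\{i:z_i\neq0\}$ counts nonzero entries; $\mathrm{vol}$ is Lebesgue measure. *)

theory Defs
  imports "HOL-Analysis.Analysis"
begin

definition unit_cube :: "(real ^ 'n) set" where
  "unit_cube = {x. \<forall>i. 0 \<le> x $ i \<and> x $ i \<le> 1}"

definition hamming :: "real ^ 'n \<Rightarrow> real ^ 'n \<Rightarrow> nat" where
  "hamming x y = card {i. x $ i \<noteq> y $ i}"

definition bounded_prob_density_on_cube :: "(real ^ 'n \<Rightarrow> real) \<Rightarrow> bool" where
  "bounded_prob_density_on_cube \<rho> \<longleftrightarrow>
     (\<forall>x\<in>unit_cube. 0 \<le> \<rho> x) \<and>
     set_integrable lebesgue unit_cube \<rho> \<and>
     (LINT x:unit_cube|lebesgue. \<rho> x) = 1 \<and>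
     bdd_above (\<rho> ` unit_cube)"

end

theory Submission
  imports Defs "HOL-Probability.Hoeffding"
begin

text \<open>Let \<open>d(x)\<close> be the Hamming distance from \<open>x\<close> to a compact set \<open>A\<close> in the unit cube.
  Talagrand's exponential inequality \<open>vol A \<cdot> \<integral> exp (t d) \<le> exp (n t\<^sup>2 / 4)\<close> is proved by
  adding one coordinate \<open>j\<close> at a time: on the fibre where \<open>x\<^sub>j = w\<close>, the distance is at most the
  distance to the section of \<open>A\<close> at \<open>w\<close> in the other coordinates, and at most one more than the
  distance to the shadow of \<open>A\<close> along the \<open>j\<close>-th axis. Combining the two inductive bounds
  linearly and optimising leaves the factor \<open>cosh (t/2)\<^sup>2 \<le> exp (t\<^sup>2/4)\<close>.
  Markov's inequality with \<open>t = 2k/n\<close> gives \<open>vol A \<cdot> vol {d \<ge> k} \<le> exp (- k\<^sup>2 / n)\<close>.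
  Applied to a compact inner approximation of the misclassified region, which has volume at least
  \<open>1/2\<close>, this shows that outside a set of volume at most \<open>2 exp (- \<epsilon>\<^sup>2 / n)\<close> every point of the cube is
  within Hamming distance \<open>\<epsilon>\<close> of a misclassified point; the density of class \<open>c\<close> gives this
  exceptional set mass at most \<open>U\<^sub>c\<close> times its volume.\<close>

definition vec_upd :: "real^'n \<Rightarrow> 'n \<Rightarrow> real \<Rightarrow> real^'n" where
  "vec_upd x j w = (\<chi> i. if i = j then w else x $ i)"

lemma vec_upd_nth [simp]: "vec_upd x j w $ i = (if i = j then w else x $ i)"
  by (simp add: vec_upd_def)

lemma vec_upd_same [simp]: "vec_upd x j (x $ j) = x"
  by (simp add: vec_eq_iff)

lemma vec_upd_vec_upd [simp]: "vec_upd (vec_upd x j v) j w = vec_upd x j w"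
  by (simp add: vec_eq_iff)

lemma continuous_on_vec_upd:
  "continuous_on UNIV (\<lambda>p::(real^'n) \<times> real. vec_upd (fst p) j (snd p))"
  unfolding vec_upd_def
  by (rule continuous_on_vec_lambda, case_tac "i = j") (simp_all add: continuous_intros)

lemma continuous_on_vec_upd_left: "continuous_on UNIV (\<lambda>x::real^'n. vec_upd x j w)"
  unfolding vec_upd_def
  by (rule continuous_on_vec_lambda, case_tac "i = j") (simp_all add: continuous_intros)

lemma measurable_vec_upd [measurable (raw)]:
  assumes "f \<in> borel_measurable M" "g \<in> borel_measurable M"
  shows "(\<lambda>x. vec_upd (f x) j (g x) :: real^'n) \<in> borel_measurable M"
proof -
  have pair: "(\<lambda>x. (f x, g x)) \<in> M \<rightarrow>\<^sub>M borel \<Otimes>\<^sub>M borel"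
    using assms by measurable
  have "(\<lambda>p::(real^'n) \<times> real. vec_upd (fst p) j (snd p)) \<in> borel_measurable (borel \<Otimes>\<^sub>M borel)"
    using borel_measurable_continuous_onI[OF continuous_on_vec_upd] by (simp add: borel_prod)
  from measurable_comp[OF pair this] show ?thesis
    by (simp add: comp_def)
qed

lemma unit_cube_eq_cbox: "unit_cube = cbox (0::real^'n) 1"
  by (auto simp: unit_cube_def mem_box_cart)

lemma sets_unit_cube [measurable]: "unit_cube \<in> sets (borel :: (real^'n) measure)"
  by (simp add: unit_cube_eq_cbox)

lemma compact_unit_cube: "compact (unit_cube :: (real^'n) set)"
  by (simp add: unit_cube_eq_cbox)

lemma prod_Basis_cart: "(\<Prod>b\<in>Basis. x \<bullet> b) = (\<Prod>i\<in>UNIV. x $ i)" for x :: "real^'n"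
  by (simp add: Basis_vec_def cart_eq_inner_axis axis_eq_axis prod.UNION_disjoint)

lemma prod_Basis_prod_cart:
  "(\<Prod>b\<in>Basis. p \<bullet> b) = (\<Prod>i\<in>UNIV. fst p $ i) * snd p" for p :: "(real^'n) \<times> real"
proof -
  have "(\<Prod>b\<in>Basis. p \<bullet> b)
      = (\<Prod>b\<in>(\<lambda>v. (v, 0)) ` Basis. p \<bullet> b) * (\<Prod>b\<in>(\<lambda>v. (0, v)) ` Basis. p \<bullet> b)"
    unfolding Basis_prod_def by (rule prod.union_disjoint) auto
  also have "\<dots> = (\<Prod>b\<in>(Basis :: (real^'n) set). fst p \<bullet> b) * snd p"
    by (subst (1 2) prod.reindex) (auto simp: inj_on_def inner_Pair_0)
  finally show ?thesis
    by (simp add: prod_Basis_cart)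
qed

lemma emeasure_lborel_box_cart:
  fixes l u :: "real^'n"
  assumes "\<And>i. l $ i \<le> u $ i"
  shows "emeasure lborel (box l u) = ennreal (\<Prod>i\<in>UNIV. u $ i - l $ i)"
proof -
  have "\<forall>b\<in>Basis. l \<bullet> b \<le> u \<bullet> b"
    using assms by (auto simp: Basis_vec_def inner_axis)
  then show ?thesis
    by (simp add: emeasure_lborel_box_eq prod_Basis_cart)
qed

lemma emeasure_unit_cube: "emeasure lborel (unit_cube :: (real^'n) set) = 1"
proof -
  have "\<forall>b\<in>Basis. (0::real^'n) \<bullet> b \<le> 1 \<bullet> b"
    by (auto simp: Basis_vec_def inner_axis)
  then show ?thesis
    by (simp add: unit_cube_eq_cbox emeasure_lborel_cbox_eq prod_Basis_cart)
qed

lemma emeasure_subset_unit_cube_le: "A \<subseteq> unit_cube \<Longrightarrow> emeasure lborel A \<le> 1" for A :: "(real^'n) set"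
  using emeasure_mono[of A unit_cube lborel] by (simp add: emeasure_unit_cube)

lemma emeasure_eq_measure_subset_unit_cube:
  "A \<subseteq> unit_cube \<Longrightarrow> emeasure lborel A = ennreal (measure lborel A)" for A :: "(real^'n) set"
  using emeasure_subset_unit_cube_le[of A] by (intro emeasure_eq_ennreal_measure) (auto simp: top_unique)

lemma nn_integral_unit_cube_const:
  "(\<integral>\<^sup>+x. indicator unit_cube x * ennreal K \<partial>(lborel::(real^'n) measure)) = ennreal K"
  by (subst mult.commute, subst nn_integral_cmult_indicator) (auto simp: emeasure_unit_cube)

subsection \<open>Integrating out one coordinate of the unit cube\<close>

definition coordinate_swap :: "'n \<Rightarrow> (real^'n) \<times> real \<Rightarrow> (real^'n) \<times> real" where
  "coordinate_swap j p = (vec_upd (fst p) j (snd p), fst p $ j)"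

lemma measurable_coordinate_swap [measurable]: "coordinate_swap j \<in> borel_measurable borel"
  unfolding coordinate_swap_def
  by (intro borel_measurable_continuous_onI continuous_on_Pair continuous_on_vec_upd continuous_intros)

lemma vimage_coordinate_swap_box:
  "coordinate_swap j -` (box la ua \<times> box lb ub)
     = box (vec_upd la j lb) (vec_upd ua j ub) \<times> box (la $ j) (ua $ j)"
proof -
  have "(\<forall>i. la $ i < vec_upd x j w $ i \<and> vec_upd x j w $ i < ua $ i) \<and> lb < x $ j \<and> x $ j < ub
    \<longleftrightarrow> (\<forall>i. vec_upd la j lb $ i < x $ i \<and> x $ i < vec_upd ua j ub $ i) \<and> la $ j < w \<and> w < ua $ j"
    for x w by (metis vec_upd_nth)
  then show ?thesis
    unfolding set_eq_iff by (simp add: coordinate_swap_def mem_box_cart split_paired_all del: vec_upd_nth)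
qed

lemma distr_coordinate_swap_lborel:
  "distr lborel borel (coordinate_swap j) = (lborel :: ((real^'n) \<times> real) measure)"
proof (rule lborel_eqI[symmetric])
  fix l u :: "(real^'n) \<times> real"
  assume le: "\<And>b. b \<in> Basis \<Longrightarrow> l \<bullet> b \<le> u \<bullet> b"
  obtain la lb ua ub where lu: "l = (la, lb)" "u = (ua, ub)"
    by (cases l, cases u) auto
  have lea: "la $ i \<le> ua $ i" for i
    using le[of "(axis i 1, 0)"] by (simp add: lu Basis_prod_def inner_axis)
  have leb: "lb \<le> ub"
    using le[of "(0, 1)"] by (simp add: lu Basis_prod_def)
  have "emeasure (distr lborel borel (coordinate_swap j)) (box l u)
      = emeasure lborel (coordinate_swap j -` box l u)"
    by (simp add: emeasure_distr)
  also have "\<dots> = emeasure (lborel \<Otimes>\<^sub>M lborel) (box (vec_upd la j lb) (vec_upd ua j ub) \<times> box (la $ j) (ua $ j))"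
    by (simp only: lu box_prod fst_conv snd_conv vimage_coordinate_swap_box lborel_prod)
  also have "\<dots> = ennreal ((\<Prod>i\<in>UNIV. vec_upd ua j ub $ i - vec_upd la j lb $ i) * (ua $ j - la $ j))"
    using lea leb
    by (simp add: lborel.emeasure_pair_measure_Times emeasure_lborel_box_cart ennreal_mult prod_nonneg)
  also have "(\<Prod>i\<in>UNIV. vec_upd ua j ub $ i - vec_upd la j lb $ i) * (ua $ j - la $ j)
      = (\<Prod>i\<in>UNIV. ua $ i - la $ i) * (ub - lb)"
  proof -
    have "(\<Prod>i\<in>UNIV - {j}. vec_upd ua j ub $ i - vec_upd la j lb $ i) = (\<Prod>i\<in>UNIV - {j}. ua $ i - la $ i)"
      by (rule prod.cong) auto
    then show ?thesis
      by (simp add: prod.remove[of UNIV j] mult_ac del: vec_upd_nth) simp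
  qed
  finally show "emeasure (distr lborel borel (coordinate_swap j)) (box l u) = (\<Prod>b\<in>Basis. (u - l) \<bullet> b)"
    by (simp add: prod_Basis_prod_cart lu)
qed simp

lemma indicator_unit_cube_vec_upd:
  "indicator unit_cube (vec_upd x j w) * (indicator {0..1} (x $ j) :: ennreal)
     = indicator {0..1} w * indicator unit_cube x"
  by (auto simp: indicator_def unit_cube_def)

lemma nn_integral_unit_cube_vec_upd:
  fixes g :: "real^'n \<Rightarrow> ennreal"
  assumes [measurable]: "g \<in> borel_measurable borel"
  shows "(\<integral>\<^sup>+x. indicator unit_cube x * g x \<partial>lborel)
    = (\<integral>\<^sup>+w. indicator {0..1} w * (\<integral>\<^sup>+x. indicator unit_cube x * g (vec_upd x j w) \<partial>lborel) \<partial>lborel)"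
proof -
  define G where "G p = indicator unit_cube (fst p) * g (fst p) * indicator {0..1::real} (snd p)"
    for p :: "(real^'n) \<times> real"
  have "G \<in> borel_measurable (lborel \<Otimes>\<^sub>M lborel)"
    unfolding G_def by measurable
  then have [measurable]: "G \<in> borel_measurable borel"
    by (simp add: lborel_prod)
  have "(\<integral>\<^sup>+x. indicator unit_cube x * g x \<partial>lborel) = (\<integral>\<^sup>+x. \<integral>\<^sup>+w. G (x, w) \<partial>lborel \<partial>lborel)"
    by (simp add: G_def nn_integral_cmult)
  also have "\<dots> = (\<integral>\<^sup>+p. G p \<partial>lborel)"
    by (simp add: lborel.nn_integral_fst lborel_prod)
  also have "\<dots> = (\<integral>\<^sup>+p. G (coordinate_swap j p) \<partial>lborel)"
    by (subst (1) distr_coordinate_swap_lborel[symmetric, of j]) (simp add: nn_integral_distr)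
  also have "\<dots> = (\<integral>\<^sup>+p. G (coordinate_swap j p) \<partial>(lborel \<Otimes>\<^sub>M lborel))"
    by (simp add: lborel_prod)
  also have "\<dots> = (\<integral>\<^sup>+w. \<integral>\<^sup>+x. G (coordinate_swap j (x, w)) \<partial>lborel \<partial>lborel)"
    by (rule lborel_pair.nn_integral_snd[symmetric]) (unfold lborel_prod, measurable)
  also have "\<dots> = (\<integral>\<^sup>+w. indicator {0..1} w * (\<integral>\<^sup>+x. indicator unit_cube x * g (vec_upd x j w) \<partial>lborel) \<partial>lborel)"
  proof (rule nn_integral_cong)
    fix w :: real
    have "G (coordinate_swap j (x, w)) = indicator {0..1} w * (indicator unit_cube x * g (vec_upd x j w))" for x
      using indicator_unit_cube_vec_upd[of x j w] by (simp add: G_def coordinate_swap_def mult_ac)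
    then show "(\<integral>\<^sup>+x. G (coordinate_swap j (x, w)) \<partial>lborel)
        = indicator {0..1} w * (\<integral>\<^sup>+x. indicator unit_cube x * g (vec_upd x j w) \<partial>lborel)"
      by (simp only:) (rule nn_integral_cmult, measurable)
  qed
  finally show ?thesis .
qed

lemma borel_measurable_nn_integral_vec_upd:
  assumes [measurable]: "g \<in> borel_measurable (borel :: (real^'n) measure)"
  shows "(\<lambda>w. \<integral>\<^sup>+x. indicator unit_cube x * g (vec_upd x j w) \<partial>lborel) \<in> borel_measurable lborel"
proof -
  have "(\<lambda>p::real \<times> (real^'n). indicator unit_cube (snd p) * g (vec_upd (snd p) j (fst p)))
      \<in> borel_measurable (lborel \<Otimes>\<^sub>M lborel)"
    by measurable
  from lborel.borel_measurable_nn_integral_fst[OF this] show ?thesis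
    by simp
qed

subsection \<open>Hamming distance to a set\<close>

definition hamming_on :: "'n set \<Rightarrow> real^'n \<Rightarrow> real^'n \<Rightarrow> nat" where
  "hamming_on J x y = card {i\<in>J. x $ i \<noteq> y $ i}"

lemma hamming_on_UNIV: "hamming_on UNIV x y = hamming x y"
  by (simp add: hamming_on_def hamming_def)

text \<open>\<open>Min {}\<close> is unspecified, so the lemmas below assume \<open>A \<noteq> {}\<close> where it matters.\<close>

definition hamming_infdist :: "'n set \<Rightarrow> real^'n \<Rightarrow> (real^'n) set \<Rightarrow> nat" where
  "hamming_infdist J x A = Min (hamming_on J x ` A)"

lemma finite_hamming_on_image: "finite (hamming_on J x ` A)" for x :: "real^'n"
proof (rule finite_subset)
  show "hamming_on J x ` A \<subseteq> {..CARD('n)}"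
    by (auto simp: hamming_on_def intro!: card_mono)
qed simp

lemma hamming_infdist_le: "y \<in> A \<Longrightarrow> hamming_infdist J x A \<le> hamming_on J x y"
  unfolding hamming_infdist_def by (rule Min_le[OF finite_hamming_on_image]) simp

lemma hamming_infdist_attained: "A \<noteq> {} \<Longrightarrow> \<exists>y\<in>A. hamming_infdist J x A = hamming_on J x y"
  unfolding hamming_infdist_def using Min_in[OF finite_hamming_on_image, of J x A] by auto

definition vec_restrict :: "'n set \<Rightarrow> real^'n \<Rightarrow> real^'n" where
  "vec_restrict S x = (\<chi> i. if i \<in> S then x $ i else 0)"

lemma continuous_on_vec_restrict: "continuous_on UNIV (vec_restrict S)"
  unfolding vec_restrict_def
  by (rule continuous_on_vec_lambda, case_tac "i \<in> S") (simp_all add: continuous_intros)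

lemma vec_restrict_eq_iff: "vec_restrict S x = vec_restrict S y \<longleftrightarrow> (\<forall>i\<in>S. x $ i = y $ i)"
  by (auto simp: vec_restrict_def vec_eq_iff)

lemma hamming_infdist_atMost_eq:
  assumes "A \<noteq> {}"
  shows "{x. hamming_infdist J x A \<le> m}
    = (\<Union>S\<in>{S. S \<subseteq> J \<and> card (J - S) \<le> m}. vec_restrict S -` vec_restrict S ` A)"
proof (intro set_eqI iffI)
  fix x assume "x \<in> {x. hamming_infdist J x A \<le> m}"
  then obtain y where y: "y \<in> A" "hamming_on J x y \<le> m"
    using hamming_infdist_attained[OF assms, of J x] by auto
  let ?S = "{i\<in>J. x $ i = y $ i}"
  have "J - ?S = {i\<in>J. x $ i \<noteq> y $ i}"
    by auto
  then have "?S \<in> {S. S \<subseteq> J \<and> card (J - S) \<le> m}"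
    using y by (auto simp: hamming_on_def)
  moreover have "x \<in> vec_restrict ?S -` vec_restrict ?S ` A"
    using y by (auto simp: vec_restrict_eq_iff intro!: image_eqI[of _ _ y])
  ultimately show "x \<in> (\<Union>S\<in>{S. S \<subseteq> J \<and> card (J - S) \<le> m}. vec_restrict S -` vec_restrict S ` A)"
    by blast
next
  fix x assume "x \<in> (\<Union>S\<in>{S. S \<subseteq> J \<and> card (J - S) \<le> m}. vec_restrict S -` vec_restrict S ` A)"
  then obtain S y where S: "S \<subseteq> J" "card (J - S) \<le> m"
    and y: "y \<in> A" "vec_restrict S x = vec_restrict S y"
    by auto
  have "{i\<in>J. x $ i \<noteq> y $ i} \<subseteq> J - S"
    using y(2) by (auto simp: vec_restrict_eq_iff)
  then have "hamming_on J x y \<le> card (J - S)"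
    unfolding hamming_on_def by (intro card_mono) auto
  with hamming_infdist_le[OF y(1), of J x] S show "x \<in> {x. hamming_infdist J x A \<le> m}"
    by auto
qed

lemma closed_hamming_infdist_atMost:
  assumes "compact A" "A \<noteq> {}"
  shows "closed {x. hamming_infdist J x A \<le> m}"
  unfolding hamming_infdist_atMost_eq[OF assms(2)]
proof (intro closed_UN ballI)
  fix S
  have "compact (vec_restrict S ` A)"
    by (intro compact_continuous_image continuous_on_subset[OF continuous_on_vec_restrict] assms) auto
  then show "closed (vec_restrict S -` vec_restrict S ` A)"
    by (intro closed_vimage continuous_on_vec_restrict compact_imp_closed)
qed simp

lemma measurable_hamming_infdist:
  assumes "compact A" "A \<noteq> {}"
  shows "(\<lambda>x. hamming_infdist J x A) \<in> borel \<rightarrow>\<^sub>M count_space UNIV"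
proof (subst measurable_count_space_eq_countable, simp, safe)
  fix a
  show "(\<lambda>x. hamming_infdist J x A) -` {a} \<inter> space borel \<in> sets borel"
  proof (cases a)
    case 0
    then have "(\<lambda>x. hamming_infdist J x A) -` {a} \<inter> space borel = {x. hamming_infdist J x A \<le> 0}"
      by auto
    then show ?thesis
      using borel_closed[OF closed_hamming_infdist_atMost[OF assms, of J 0]] by simp
  next
    case (Suc b)
    then have "(\<lambda>x. hamming_infdist J x A) -` {a} \<inter> space borel
        = {x. hamming_infdist J x A \<le> a} - {x. hamming_infdist J x A \<le> b}"
      by auto
    then show ?thesis
      using closed_hamming_infdist_atMost[OF assms] by (simp add: borel_closed sets.Diff)
  qed
qed simp

lemma borel_measurable_hamming_infdist:
  assumes "compact A" "A \<noteq> {}"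
  shows "(\<lambda>x. f (hamming_infdist J x A) :: ennreal) \<in> borel_measurable borel"
proof -
  have "f \<in> count_space UNIV \<rightarrow>\<^sub>M borel"
    by simp
  with measurable_hamming_infdist[OF assms] show ?thesis
    by (rule measurable_compose)
qed

subsection \<open>Sections and shadows along a coordinate\<close>

definition cube_section :: "(real^'n) set \<Rightarrow> 'n \<Rightarrow> real \<Rightarrow> (real^'n) set" where
  "cube_section A j w = {x \<in> unit_cube. vec_upd x j w \<in> A}"

definition cube_shadow :: "(real^'n) set \<Rightarrow> 'n \<Rightarrow> (real^'n) set" where
  "cube_shadow A j = {x \<in> unit_cube. \<exists>w\<in>{0..1}. vec_upd x j w \<in> A}"

lemma compact_cube_section: "compact A \<Longrightarrow> compact (cube_section A j w)"
proof -
  assume "compact A"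
  moreover have "cube_section A j w = unit_cube \<inter> (\<lambda>x. vec_upd x j w) -` A"
    by (auto simp: cube_section_def)
  ultimately show ?thesis
    by (simp add: compact_Int_closed compact_unit_cube closed_vimage continuous_on_vec_upd_left compact_imp_closed)
qed

lemma cube_shadow_eq:
  assumes "A \<subseteq> unit_cube"
  shows "cube_shadow A j = unit_cube \<inter> (\<lambda>x. vec_upd x j 0) -` (\<lambda>x. vec_upd x j 0) ` A"
proof (intro set_eqI iffI)
  fix x assume "x \<in> cube_shadow A j"
  then obtain w where "x \<in> unit_cube" "vec_upd x j w \<in> A"
    by (auto simp: cube_shadow_def)
  then show "x \<in> unit_cube \<inter> (\<lambda>x. vec_upd x j 0) -` (\<lambda>x. vec_upd x j 0) ` A"
    by (auto intro!: image_eqI[of _ _ "vec_upd x j w"])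
next
  fix x assume "x \<in> unit_cube \<inter> (\<lambda>x. vec_upd x j 0) -` (\<lambda>x. vec_upd x j 0) ` A"
  then obtain a where x: "x \<in> unit_cube" and a: "a \<in> A" "vec_upd x j 0 = vec_upd a j 0"
    by auto
  have "vec_upd x j (a $ j) = a"
    using a(2) by (auto simp: vec_eq_iff) (metis vec_upd_nth)
  moreover have "a $ j \<in> {0..1}"
    using a(1) assms by (auto simp: unit_cube_def)
  ultimately show "x \<in> cube_shadow A j"
    using x a by (auto simp: cube_shadow_def intro!: bexI[of _ "a $ j"])
qed

lemma compact_cube_shadow: "compact A \<Longrightarrow> A \<subseteq> unit_cube \<Longrightarrow> compact (cube_shadow A j)"
proof -
  assume "compact A" "A \<subseteq> unit_cube"
  moreover have "compact ((\<lambda>x. vec_upd x j 0) ` A)"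
    by (intro compact_continuous_image continuous_on_subset[OF continuous_on_vec_upd_left] \<open>compact A\<close>) auto
  ultimately show ?thesis
    by (simp add: cube_shadow_eq compact_Int_closed compact_unit_cube closed_vimage
        continuous_on_vec_upd_left compact_imp_closed)
qed

lemma subset_cube_shadow:
  assumes "A \<subseteq> unit_cube"
  shows "A \<subseteq> cube_shadow A j"
proof
  fix x assume "x \<in> A"
  moreover from this assms have "x \<in> unit_cube" "x $ j \<in> {0..1}"
    by (auto simp: unit_cube_def)
  ultimately show "x \<in> cube_shadow A j"
    unfolding cube_shadow_def by (metis (mono_tags, lifting) mem_Collect_eq vec_upd_same)
qed

lemma cube_section_subset_shadow: "w \<in> {0..1} \<Longrightarrow> cube_section A j w \<subseteq> cube_shadow A j"
  by (auto simp: cube_section_def cube_shadow_def)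

lemma hamming_infdist_vec_upd_section:
  assumes "j \<notin> J" "cube_section A j w \<noteq> {}"
  shows "hamming_infdist (insert j J) (vec_upd x j w) A \<le> hamming_infdist J x (cube_section A j w)"
proof -
  obtain y where y: "y \<in> cube_section A j w" "hamming_infdist J x (cube_section A j w) = hamming_on J x y"
    using hamming_infdist_attained[OF assms(2)] by blast
  have "hamming_on (insert j J) (vec_upd x j w) (vec_upd y j w) = hamming_on J x y"
    using assms(1) unfolding hamming_on_def by (intro arg_cong[where f = card]) auto
  moreover have "vec_upd y j w \<in> A"
    using y(1) by (simp add: cube_section_def)
  ultimately show ?thesis
    using hamming_infdist_le y(2) by metis
qed

lemma hamming_infdist_vec_upd_shadow:
  assumes "cube_shadow A j \<noteq> {}"
  shows "hamming_infdist (insert j J) (vec_upd x j w) A \<le> hamming_infdist J x (cube_shadow A j) + 1"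
proof -
  obtain y where y: "y \<in> cube_shadow A j" "hamming_infdist J x (cube_shadow A j) = hamming_on J x y"
    using hamming_infdist_attained[OF assms] by blast
  then obtain v where yA: "vec_upd y j v \<in> A"
    by (auto simp: cube_shadow_def)
  have "{i \<in> insert j J. vec_upd x j w $ i \<noteq> vec_upd y j v $ i} \<subseteq> insert j {i\<in>J. x $ i \<noteq> y $ i}"
    by auto
  then have "hamming_on (insert j J) (vec_upd x j w) (vec_upd y j v) \<le> card (insert j {i\<in>J. x $ i \<noteq> y $ i})"
    unfolding hamming_on_def by (intro card_mono) auto
  also have "\<dots> \<le> hamming_on J x y + 1"
    by (simp add: hamming_on_def card_insert_if)
  finally show ?thesis
    using hamming_infdist_le[OF yA, of "insert j J" "vec_upd x j w"] y(2) by simp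
qed

lemma sets_cube_section [measurable]:
  assumes "A \<in> sets borel"
  shows "cube_section A j w \<in> sets (borel :: (real^'n) measure)"
proof -
  have "(\<lambda>x. vec_upd x j w) -` A \<inter> space borel \<in> sets borel"
    using borel_measurable_continuous_onI[OF continuous_on_vec_upd_left] assms by (rule measurable_sets)
  moreover have "cube_section A j w = unit_cube \<inter> ((\<lambda>x. vec_upd x j w) -` A \<inter> space borel)"
    by (auto simp: cube_section_def)
  ultimately show ?thesis
    by simp
qed

lemma emeasure_cube_section:
  assumes [measurable]: "A \<in> sets borel"
  shows "emeasure lborel (cube_section A j w) = (\<integral>\<^sup>+x. indicator unit_cube x * indicator A (vec_upd x j w) \<partial>lborel)"
proof -
  have "indicator (cube_section A j w) x = indicator unit_cube x * (indicator A (vec_upd x j w) :: ennreal)" for x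
    by (simp add: cube_section_def indicator_def)
  then show ?thesis
    by (simp flip: nn_integral_indicator)
qed

lemma emeasure_eq_nn_integral_cube_section:
  assumes [measurable]: "A \<in> sets borel" and "A \<subseteq> unit_cube"
  shows "emeasure lborel A = (\<integral>\<^sup>+w. indicator {0..1} w * emeasure lborel (cube_section A j w) \<partial>lborel)"
proof -
  have "emeasure lborel A = (\<integral>\<^sup>+x. indicator unit_cube x * indicator A x \<partial>lborel)"
    using assms(2) by (simp add: indicator_inter_arith[symmetric] Int_absorb1 flip: nn_integral_indicator)
  also have "\<dots> = (\<integral>\<^sup>+w. indicator {0..1} w * emeasure lborel (cube_section A j w) \<partial>lborel)"
    by (simp add: nn_integral_unit_cube_vec_upd emeasure_cube_section)
  finally show ?thesis .
qed

subsection \<open>Talagrand's exponential inequality for the Hamming distance\<close>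

definition hamming_exp_moment :: "'n set \<Rightarrow> (real^'n) set \<Rightarrow> real \<Rightarrow> ennreal" where
  "hamming_exp_moment J A t =
     (\<integral>\<^sup>+x. indicator unit_cube x * ennreal (exp (t * real (hamming_infdist J x A))) \<partial>lborel)"

definition hamming_fibre_exp_moment :: "'n set \<Rightarrow> (real^'n) set \<Rightarrow> real \<Rightarrow> 'n \<Rightarrow> real \<Rightarrow> ennreal" where
  "hamming_fibre_exp_moment J A t j w =
     (\<integral>\<^sup>+x. indicator unit_cube x * ennreal (exp (t * real (hamming_infdist J (vec_upd x j w) A))) \<partial>lborel)"

lemma hamming_exp_moment_eq_fibres:
  assumes "compact A" "A \<noteq> {}"
  shows "hamming_exp_moment J A t = (\<integral>\<^sup>+w. indicator {0..1} w * hamming_fibre_exp_moment J A t j w \<partial>lborel)"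
  unfolding hamming_exp_moment_def hamming_fibre_exp_moment_def
  using borel_measurable_hamming_infdist[OF assms] by (rule nn_integral_unit_cube_vec_upd)

lemma borel_measurable_hamming_fibre_exp_moment:
  assumes "compact A" "A \<noteq> {}"
  shows "hamming_fibre_exp_moment J A t j \<in> borel_measurable lborel"
  unfolding hamming_fibre_exp_moment_def[abs_def]
  using borel_measurable_hamming_infdist[OF assms] by (rule borel_measurable_nn_integral_vec_upd)

lemma hamming_fibre_exp_moment_le_section:
  assumes "j \<notin> J" "0 \<le> t" "cube_section A j w \<noteq> {}"
  shows "hamming_fibre_exp_moment (insert j J) A t j w \<le> hamming_exp_moment J (cube_section A j w) t"
  unfolding hamming_exp_moment_def hamming_fibre_exp_moment_def
proof (intro nn_integral_mono mult_left_mono ennreal_leI)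
  fix x
  show "exp (t * real (hamming_infdist (insert j J) (vec_upd x j w) A))
      \<le> exp (t * real (hamming_infdist J x (cube_section A j w)))"
    using hamming_infdist_vec_upd_section[OF assms(1,3), of x] assms(2) by (simp add: mult_left_mono)
qed simp

lemma hamming_fibre_exp_moment_le_shadow:
  assumes "0 \<le> t" "compact (cube_shadow A j)" "cube_shadow A j \<noteq> {}"
  shows "hamming_fibre_exp_moment (insert j J) A t j w
    \<le> ennreal (exp t) * hamming_exp_moment J (cube_shadow A j) t"
proof -
  let ?d = "\<lambda>x. real (hamming_infdist J x (cube_shadow A j))"
  have [measurable]: "(\<lambda>x. ennreal (exp (t * ?d x))) \<in> borel_measurable borel"
    using assms(2,3) by (rule borel_measurable_hamming_infdist)
  have "hamming_fibre_exp_moment (insert j J) A t j w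
      \<le> (\<integral>\<^sup>+x. ennreal (exp t) * (indicator unit_cube x * ennreal (exp (t * ?d x))) \<partial>lborel)"
    unfolding hamming_fibre_exp_moment_def
  proof (intro nn_integral_mono)
    fix x
    have "t * real (hamming_infdist (insert j J) (vec_upd x j w) A) \<le> t + t * ?d x"
      using mult_left_mono[of "real (hamming_infdist (insert j J) (vec_upd x j w) A)" "?d x + 1" t]
        hamming_infdist_vec_upd_shadow[OF assms(3), of J x w] assms(1)
      by (simp add: algebra_simps)
    then have "ennreal (exp (t * real (hamming_infdist (insert j J) (vec_upd x j w) A)))
        \<le> ennreal (exp t) * ennreal (exp (t * ?d x))"
      by (simp add: ennreal_mult[symmetric] exp_add[symmetric])
    then show "indicator unit_cube x * ennreal (exp (t * real (hamming_infdist (insert j J) (vec_upd x j w) A)))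
        \<le> ennreal (exp t) * (indicator unit_cube x * ennreal (exp (t * ?d x)))"
      by (simp add: mult.left_commute[of "ennreal (exp t)"] mult_left_mono)
  qed
  also have "\<dots> = ennreal (exp t) * hamming_exp_moment J (cube_shadow A j) t"
    unfolding hamming_exp_moment_def by (rule nn_integral_cmult) measurable
  finally show ?thesis .
qed

text \<open>Maximising over \<open>u\<close> gives \<open>cosh (t/2)\<^sup>2\<close>, and \<open>cosh s \<le> exp (s\<^sup>2/2)\<close> is Hoeffding's lemma for a fair coin.\<close>

lemma quadratic_le_exp_square:
  fixes t u :: real
  assumes t: "t \<ge> 0"
  shows "u * (1 + exp t) - exp t * u\<^sup>2 \<le> exp (t\<^sup>2 / 4)"
proof -
  define E where "E = exp t"
  have E: "E > 0" "E \<ge> 1"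
    using t by (auto simp: E_def)
  have "u * (1 + E) - E * u\<^sup>2 = E * (u * ((1 + E) / E - u))"
    using E by (simp add: field_simps power2_eq_square)
  also have "\<dots> \<le> E * (((1 + E) / E)\<^sup>2 / 4)"
    using E by (intro mult_left_mono mult_const_minus_self_real_le) auto
  also have "\<dots> = ((1 + E) / 2)\<^sup>2 / E"
    using E by (simp add: field_simps power2_eq_square)
  also have "\<dots> \<le> exp (t\<^sup>2 / 4)"
  proof -
    have "- t * (1/2) + ln (1 + (1/2) * (exp t - 1)) \<le> t\<^sup>2 / 8"
      using Hoeffdings_lemma_aux[of t "1/2"] t by simp
    then have "ln ((1 + E) / 2) \<le> t / 2 + t\<^sup>2 / 8"
      by (simp add: E_def field_simps)
    then have "(1 + E) / 2 \<le> exp (t / 2 + t\<^sup>2 / 8)"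
      using E by (metis exp_le_cancel_iff exp_ln half_gt_zero add_pos_pos zero_less_one)
    then have "((1 + E) / 2)\<^sup>2 \<le> (exp (t / 2 + t\<^sup>2 / 8))\<^sup>2"
      using E by (intro power_mono) auto
    also have "\<dots> = E * exp (t\<^sup>2 / 4)"
      by (simp add: E_def power2_eq_square exp_add[symmetric])
    finally show ?thesis
      using E by (simp add: field_simps)
  qed
  finally show ?thesis
    by (simp add: E_def)
qed

text \<open>\<open>c (1 + E) / b - c E v / b\<^sup>2\<close> is the chord of the convex function \<open>c / v\<close> between
  \<open>v = b / E\<close> and \<open>v = b\<close>; it dominates \<open>min (c / v) (E c / b)\<close> on \<open>[0, b]\<close>.\<close>

lemma chord_bound:
  fixes h v b c E :: real
  assumes h: "0 \<le> h" and v: "0 \<le> v" "v \<le> b" and b: "0 < b" and c: "0 \<le> c" and E: "1 \<le> E"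
    and hv: "v * h \<le> c" and hb: "b * h \<le> E * c"
  shows "h + c * E / b\<^sup>2 * v \<le> c * (1 + E) / b"
proof -
  have "h * b\<^sup>2 + c * E * v \<le> c * (1 + E) * b"
  proof (cases "E * v \<ge> b")
    case True
    then have "v > 0"
      using b E v(1) by (cases "v = 0") auto
    have "h * b\<^sup>2 * v \<le> c * b\<^sup>2"
      using mult_right_mono[OF hv, of "b\<^sup>2"] by (simp add: mult_ac)
    moreover have "c * ((E * v - b) * (v - b)) \<le> 0"
      using True v c by (intro mult_nonneg_nonpos mult_nonneg_nonpos) auto
    ultimately have "(h * b\<^sup>2 + c * E * v - c * (1 + E) * b) * v \<le> 0"
      by (simp add: algebra_simps power2_eq_square)
    with \<open>v > 0\<close> show ?thesis
      by (simp add: mult_le_0_iff)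
  next
    case False
    have "h * b\<^sup>2 \<le> E * c * b"
      using mult_right_mono[OF hb, of b] b by (simp add: mult_ac power2_eq_square)
    moreover have "c * (E * v) \<le> c * b"
      using False c by (intro mult_left_mono) auto
    ultimately show ?thesis
      by (simp add: algebra_simps)
  qed
  then have "(h * b\<^sup>2 + c * E * v) / b\<^sup>2 \<le> c * (1 + E) * b / b\<^sup>2"
    using b by (intro divide_right_mono) auto
  with b show ?thesis
    by (simp add: add_divide_distrib power2_eq_square)
qed

lemma chord_integral_bound:
  fixes a e b c t :: real
  assumes "0 \<le> a" "0 < b" "0 \<le> c" "0 \<le> t"
    and "e + c * exp t / b\<^sup>2 * a \<le> c * (1 + exp t) / b"
  shows "a * e \<le> c * exp (t\<^sup>2 / 4)"
proof -
  have "a * e \<le> a * (c * (1 + exp t) / b - c * exp t / b\<^sup>2 * a)"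
    using assms(1,5) by (intro mult_left_mono) auto
  also have "\<dots> = c * ((a / b) * (1 + exp t) - exp t * (a / b)\<^sup>2)"
    using assms(2) by (simp add: field_simps power2_eq_square)
  also have "\<dots> \<le> c * exp (t\<^sup>2 / 4)"
    using quadratic_le_exp_square[OF assms(4), of "a / b"] assms(3) by (rule mult_left_mono)
  finally show ?thesis .
qed

lemma chord_bound_ennreal:
  fixes H V :: ennreal and b c E :: real
  assumes "0 < b" "0 < c" "1 \<le> E"
    and "V \<le> ennreal b" "V * H \<le> ennreal c" "ennreal b * H \<le> ennreal (E * c)"
  shows "H + ennreal (c * E / b\<^sup>2) * V \<le> ennreal (c * (1 + E) / b)"
proof -
  have "ennreal b * H < \<infinity>"
    using assms(6) by (simp add: le_less_trans)
  then obtain h where h: "H = ennreal h" "0 \<le> h"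
    using assms(1) by (cases H) (auto simp: ennreal_mult_less_top)
  obtain v where v: "V = ennreal v" "0 \<le> v"
    using assms(4) by (cases V) (auto simp: top_unique)
  have "h + c * E / b\<^sup>2 * v \<le> c * (1 + E) / b"
  proof (rule chord_bound)
    show "v \<le> b" "v * h \<le> c" "b * h \<le> E * c"
      using assms h v by (simp_all add: ennreal_mult[symmetric] mult.commute)
  qed (use h v assms in auto)
  then have "ennreal (h + c * E / b\<^sup>2 * v) \<le> ennreal (c * (1 + E) / b)"
    by (rule ennreal_leI)
  then show ?thesis
    using h v assms by (simp add: ennreal_mult[symmetric] ennreal_plus[symmetric] del: ennreal_plus)
qed

lemma tensorisation_step:
  fixes H V :: "real \<Rightarrow> ennreal" and b c t :: real
  assumes [measurable]: "H \<in> borel_measurable lborel" "V \<in> borel_measurable lborel"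
    and t: "0 \<le> t" and b: "0 \<le> b" and c: "0 < c"
    and V_le: "\<And>w. w \<in> {0..1} \<Longrightarrow> V w \<le> ennreal b"
    and section_bound: "\<And>w. w \<in> {0..1} \<Longrightarrow> V w * H w \<le> ennreal c"
    and shadow_bound: "\<And>w. w \<in> {0..1} \<Longrightarrow> ennreal b * H w \<le> ennreal (exp t * c)"
  shows "(\<integral>\<^sup>+w. indicator {0..1} w * V w \<partial>lborel) * (\<integral>\<^sup>+w. indicator {0..1} w * H w \<partial>lborel)
    \<le> ennreal (c * exp (t\<^sup>2 / 4))"
proof (cases "b = 0")
  case True
  have "(\<integral>\<^sup>+w. indicator {0..1} w * V w \<partial>lborel) \<le> (\<integral>\<^sup>+w. indicator {0..1::real} w * ennreal 0 \<partial>lborel)"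
    using V_le True by (intro nn_integral_mono) (simp split: split_indicator)
  then show ?thesis
    by simp
next
  case False
  with b have b: "0 < b"
    by simp
  define E where "E = exp t"
  define K where "K = c * E / b\<^sup>2"
  define R where "R = c * (1 + E) / b"
  have E: "1 \<le> E"
    using t by (simp add: E_def)
  have K: "0 < K"
    using b c E by (simp add: K_def)
  define a where "a = (\<integral>\<^sup>+w. indicator {0..1} w * V w \<partial>lborel)"
  define e where "e = (\<integral>\<^sup>+w. indicator {0..1} w * H w \<partial>lborel)"
  have pointwise: "indicator {0..1} w * H w + ennreal K * (indicator {0..1} w * V w) \<le> indicator {0..1} w * ennreal R"
    for w
  proof (cases "w \<in> {0..1}")
    case True
    then show ?thesis
      using chord_bound_ennreal[OF b c E V_le[OF True] section_bound[OF True] shadow_bound[OF True, folded E_def]]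
      by (simp add: K_def R_def)
  qed simp
  have "e + ennreal K * a = (\<integral>\<^sup>+w. indicator {0..1} w * H w + ennreal K * (indicator {0..1} w * V w) \<partial>lborel)"
    unfolding a_def e_def by (simp add: nn_integral_add nn_integral_cmult)
  also have "\<dots> \<le> (\<integral>\<^sup>+w. indicator {0..1::real} w * ennreal R \<partial>lborel)"
    by (intro nn_integral_mono pointwise)
  also have "\<dots> = ennreal R"
    by (simp add: mult.commute[of _ "ennreal R"] nn_integral_cmult_indicator)
  finally have sum_le: "e + ennreal K * a \<le> ennreal R" .
  then have "e + ennreal K * a \<noteq> \<infinity>"
    by (auto simp: top_unique)
  then have "e \<noteq> \<infinity>" "a \<noteq> \<infinity>"
    using K by (auto simp: ennreal_mult_eq_top_iff)
  then obtain e' a' where e': "e = ennreal e'" "0 \<le> e'" and a': "a = ennreal a'" "0 \<le> a'"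
    by (cases e; cases a) auto
  have "e' + c * exp t / b\<^sup>2 * a' \<le> c * (1 + exp t) / b"
    using sum_le e' a' K b c E
    by (simp add: K_def R_def E_def ennreal_mult[symmetric] ennreal_plus[symmetric] del: ennreal_plus)
  then have "ennreal (a' * e') \<le> ennreal (c * exp (t\<^sup>2 / 4))"
    using a' b c t by (intro ennreal_leI chord_integral_bound) auto
  then show ?thesis
    using a' e' by (simp add: a_def[symmetric] e_def[symmetric] ennreal_mult[symmetric])
qed

lemma emeasure_section_mult_fibre_le:
  fixes A :: "(real^'n) set"
  assumes "j \<notin> J" "0 \<le> t" "compact A"
    and IH: "\<And>B. compact B \<Longrightarrow> B \<subseteq> unit_cube \<Longrightarrow> B \<noteq> {} \<Longrightarrow>
      emeasure lborel B * hamming_exp_moment J B t \<le> ennreal c"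
  shows "emeasure lborel (cube_section A j w) * hamming_fibre_exp_moment (insert j J) A t j w \<le> ennreal c"
proof (cases "cube_section A j w = {}")
  case False
  have "emeasure lborel (cube_section A j w) * hamming_fibre_exp_moment (insert j J) A t j w
      \<le> emeasure lborel (cube_section A j w) * hamming_exp_moment J (cube_section A j w) t"
    using False assms(1,2) by (intro mult_left_mono hamming_fibre_exp_moment_le_section) auto
  also have "\<dots> \<le> ennreal c"
    using False compact_cube_section[OF assms(3)] by (intro IH) (auto simp: cube_section_def)
  finally show ?thesis .
qed simp

lemma measure_shadow_mult_fibre_le:
  fixes A :: "(real^'n) set"
  assumes "0 \<le> t" "0 \<le> c" "compact A" "A \<subseteq> unit_cube" "A \<noteq> {}"
    and IH: "\<And>B. compact B \<Longrightarrow> B \<subseteq> unit_cube \<Longrightarrow> B \<noteq> {} \<Longrightarrow>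
      emeasure lborel B * hamming_exp_moment J B t \<le> ennreal c"
  shows "ennreal (measure lborel (cube_shadow A j)) * hamming_fibre_exp_moment (insert j J) A t j w
    \<le> ennreal (exp t * c)"
proof -
  define B where "B = cube_shadow A j"
  have B: "compact B" "B \<subseteq> unit_cube" "B \<noteq> {}"
    using compact_cube_shadow[OF assms(3,4), of j] subset_cube_shadow[OF assms(4), of j] assms(5)
    by (auto simp: B_def cube_shadow_def)
  have "ennreal (measure lborel B) * hamming_fibre_exp_moment (insert j J) A t j w
      = emeasure lborel B * hamming_fibre_exp_moment (insert j J) A t j w"
    using emeasure_eq_measure_subset_unit_cube[OF B(2)] by simp
  also have "\<dots> \<le> emeasure lborel B * (ennreal (exp t) * hamming_exp_moment J B t)"
    unfolding B_def using B assms(1)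
    by (intro mult_left_mono hamming_fibre_exp_moment_le_shadow) (auto simp: B_def)
  also have "\<dots> \<le> ennreal (exp t) * ennreal c"
    using mult_left_mono[OF IH[OF B], of "ennreal (exp t)"] by (simp add: mult_ac)
  finally show ?thesis
    using assms(2) by (simp add: B_def ennreal_mult)
qed

lemma hamming_exp_moment_insert:
  fixes A :: "(real^'n) set"
  assumes "j \<notin> J" "0 \<le> t" "0 < c"
    and IH: "\<And>B. compact B \<Longrightarrow> B \<subseteq> unit_cube \<Longrightarrow> B \<noteq> {} \<Longrightarrow>
      emeasure lborel B * hamming_exp_moment J B t \<le> ennreal c"
    and A: "compact A" "A \<subseteq> unit_cube" "A \<noteq> {}"
  shows "emeasure lborel A * hamming_exp_moment (insert j J) A t \<le> ennreal (c * exp (t\<^sup>2 / 4))"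
proof -
  define S where "S = cube_section A j"
  define H where "H = hamming_fibre_exp_moment (insert j J) A t j"
  have A_sets [measurable]: "A \<in> sets borel"
    using A(1) by (simp add: compact_imp_closed borel_closed)
  have "emeasure lborel A * hamming_exp_moment (insert j J) A t
      = (\<integral>\<^sup>+w. indicator {0..1} w * emeasure lborel (S w) \<partial>lborel) * (\<integral>\<^sup>+w. indicator {0..1} w * H w \<partial>lborel)"
    using emeasure_eq_nn_integral_cube_section[OF A_sets A(2)] hamming_exp_moment_eq_fibres[OF A(1,3)]
    by (simp add: S_def H_def)
  also have "\<dots> \<le> ennreal (c * exp (t\<^sup>2 / 4))"
  proof (rule tensorisation_step[where b = "measure lborel (cube_shadow A j)"])
    show "H \<in> borel_measurable lborel"
      unfolding H_def using A(1,3) by (rule borel_measurable_hamming_fibre_exp_moment)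
    show "(\<lambda>w. emeasure lborel (S w)) \<in> borel_measurable lborel"
      unfolding S_def emeasure_cube_section[OF A_sets]
      by (rule borel_measurable_nn_integral_vec_upd) measurable
    show "emeasure lborel (S w) \<le> ennreal (measure lborel (cube_shadow A j))" if "w \<in> {0..1}" for w
    proof -
      have "cube_shadow A j \<in> sets lborel"
        using compact_cube_shadow[OF A(1,2)] by (simp add: compact_imp_closed borel_closed)
      with cube_section_subset_shadow[OF that] have "emeasure lborel (S w) \<le> emeasure lborel (cube_shadow A j)"
        unfolding S_def by (rule emeasure_mono)
      also have "\<dots> = ennreal (measure lborel (cube_shadow A j))"
        by (rule emeasure_eq_measure_subset_unit_cube) (auto simp: cube_shadow_def)
      finally show ?thesis .
    qed
    show "emeasure lborel (S w) * H w \<le> ennreal c" for w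
      unfolding S_def H_def using assms(1,2) A(1) IH by (rule emeasure_section_mult_fibre_le)
    show "ennreal (measure lborel (cube_shadow A j)) * H w \<le> ennreal (exp t * c)" for w
      unfolding H_def using assms(2,3) A IH by (intro measure_shadow_mult_fibre_le) auto
  qed (use assms in auto)
  finally show ?thesis .
qed

theorem hamming_exp_moment_le:
  fixes A :: "(real^'n) set" and J :: "'n set"
  assumes "compact A" "A \<subseteq> unit_cube" "A \<noteq> {}" "0 \<le> t"
  shows "emeasure lborel A * hamming_exp_moment J A t \<le> ennreal (exp (real (card J) * t\<^sup>2 / 4))"
proof -
  have "finite J"
    by simp
  then show ?thesis
    using assms(1-3)
  proof (induction J arbitrary: A rule: finite_induct)
    case empty
    then obtain y where "y \<in> A"
      by auto
    then have "hamming_infdist {} x A = 0" for x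
      using hamming_infdist_le[of y A "{}" x] by (simp add: hamming_on_def)
    then have "hamming_exp_moment {} A t = 1"
      using nn_integral_unit_cube_const[of 1] by (simp add: hamming_exp_moment_def)
    then show ?case
      using emeasure_subset_unit_cube_le[OF empty.prems(2)] by simp
  next
    case (insert j J)
    have "emeasure lborel A * hamming_exp_moment (insert j J) A t
        \<le> ennreal (exp (real (card J) * t\<^sup>2 / 4) * exp (t\<^sup>2 / 4))"
      using insert assms(4) by (intro hamming_exp_moment_insert) auto
    moreover have "exp (real (card J) * t\<^sup>2 / 4) * exp (t\<^sup>2 / 4) = exp (real (card (insert j J)) * t\<^sup>2 / 4)"
      using insert.hyps by (simp add: exp_add[symmetric] algebra_simps)
    ultimately show ?case
      by simp
  qed
qed

lemma sets_hamming_infdist_ge: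
  assumes "compact A" "A \<noteq> {}"
  shows "{x\<in>unit_cube. k \<le> hamming_infdist J x A} \<in> sets borel"
proof -
  have "(\<lambda>x. hamming_infdist J x A) -` {k..} \<inter> space borel \<in> sets borel"
    by (rule measurable_sets[OF measurable_hamming_infdist[OF assms]]) simp
  moreover have "{x\<in>unit_cube. k \<le> hamming_infdist J x A}
      = unit_cube \<inter> ((\<lambda>x. hamming_infdist J x A) -` {k..} \<inter> space borel)"
    by auto
  ultimately show ?thesis
    by simp
qed

lemma measure_hamming_infdist_ge:
  fixes A :: "(real^'n) set" and k :: nat
  assumes "compact A" "A \<subseteq> unit_cube" "A \<noteq> {}"
  shows "measure lborel A * measure lborel {x\<in>unit_cube. k \<le> hamming_infdist UNIV x A}
    \<le> exp (- (real k)\<^sup>2 / CARD('n))"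
proof -
  define D where "D = {x\<in>unit_cube. k \<le> hamming_infdist UNIV x A}"
  define n where "n = real CARD('n)"
  define t where "t = 2 * real k / n"
  have n: "0 < n"
    by (simp add: n_def)
  have t: "0 \<le> t"
    using n by (simp add: t_def)
  have [measurable]: "D \<in> sets borel"
    unfolding D_def using assms(1,3) by (rule sets_hamming_infdist_ge)
  have "ennreal (exp (t * real k)) * emeasure lborel D
      = (\<integral>\<^sup>+x. ennreal (exp (t * real k)) * indicator D x \<partial>lborel)"
    by (simp add: nn_integral_cmult_indicator)
  also have "\<dots> \<le> hamming_exp_moment UNIV A t"
    unfolding hamming_exp_moment_def
    using t by (intro nn_integral_mono) (auto simp: D_def mult_left_mono split: split_indicator)
  finally have "emeasure lborel A * (ennreal (exp (t * real k)) * emeasure lborel D)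
      \<le> emeasure lborel A * hamming_exp_moment UNIV A t"
    by (rule mult_left_mono) simp
  also have "\<dots> \<le> ennreal (exp (n * t\<^sup>2 / 4))"
    using hamming_exp_moment_le[OF assms t, of UNIV] by (simp add: n_def)
  finally have "measure lborel A * measure lborel D * exp (t * real k) \<le> exp (n * t\<^sup>2 / 4)"
    using assms(2) emeasure_eq_measure_subset_unit_cube[of D]
    by (simp add: emeasure_eq_measure_subset_unit_cube D_def ennreal_mult[symmetric] mult_ac)
  then have "measure lborel A * measure lborel D \<le> exp (n * t\<^sup>2 / 4) / exp (t * real k)"
    by (simp add: le_divide_eq mult_ac)
  also have "\<dots> = exp (n * t\<^sup>2 / 4 - t * real k)"
    by (simp add: exp_diff)
  also have "n * t\<^sup>2 / 4 - t * real k = - (real k)\<^sup>2 / n"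
    using n by (simp add: t_def field_simps power2_eq_square)
  finally show ?thesis
    by (simp add: D_def n_def)
qed

subsection \<open>Blowing up a set of half the volume of the cube\<close>

lemma lebesgue_inner_compact:
  assumes "B \<in> sets lebesgue" "B \<subseteq> unit_cube" "r < measure lebesgue B"
  obtains T :: "(real^'n) set" where "compact T" "T \<subseteq> B" "r < measure lborel T"
proof -
  obtain T where T: "closed T" "T \<subseteq> B" "B - T \<in> lmeasurable"
    and small: "emeasure lebesgue (B - T) < ennreal (measure lebesgue B - r)"
    using sets_lebesgue_inner_closed[OF assms(1), of "measure lebesgue B - r"] assms(3) by auto
  have "compact T"
    using T(1,2) assms(2) compact_unit_cube by (metis compact_Int_closed inf.absorb_iff2 order_trans)
  have "measure lebesgue (B - T) < measure lebesgue B - r"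
    using small T(3) by (simp add: emeasure_eq_measure2 ennreal_less_iff)
  moreover have "measure lebesgue (B - T) = measure lebesgue B - measure lebesgue T"
    using T assms(1,2) emeasure_mono[OF assms(2), of lebesgue] \<open>compact T\<close>
    by (intro measure_Diff) (auto simp: emeasure_unit_cube top_unique compact_imp_closed borel_closed)
  ultimately have "r < measure lborel T"
    using \<open>compact T\<close> by (simp add: compact_imp_closed borel_closed)
  with \<open>compact T\<close> T(2) show thesis
    by (rule that)
qed

text \<open>The Hamming distance is an integer, so being within \<open>\<epsilon>\<close> means being below \<open>k = \<lfloor>\<epsilon>\<rfloor> + 1\<close>.
  The inner approximation \<open>T\<close> of \<open>B\<close> only needs volume \<open>r\<close>, chosen such that
  \<open>exp (- k\<^sup>2 / n) / r = 2 exp (- \<epsilon>\<^sup>2 / n)\<close>; this is possible since \<open>r < 1/2\<close>.\<close>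

lemma hamming_blowup:
  fixes B :: "(real^'n) set" and \<epsilon> :: real
  assumes B: "B \<in> sets lebesgue" "B \<subseteq> unit_cube" "1/2 \<le> measure lebesgue B" and "0 \<le> \<epsilon>"
  obtains D where "D \<in> sets lebesgue" "D \<subseteq> unit_cube"
    "measure lebesgue D \<le> 2 * exp (- \<epsilon>\<^sup>2 / CARD('n))"
    "\<And>x. x \<in> unit_cube - D \<Longrightarrow> \<exists>y\<in>B. real (hamming x y) \<le> \<epsilon>"
proof -
  define n where "n = real CARD('n)"
  define k where "k = nat \<lfloor>\<epsilon>\<rfloor> + 1"
  define r where "r = exp ((\<epsilon>\<^sup>2 - (real k)\<^sup>2) / n) / 2"
  have n: "0 < n"
    by (simp add: n_def)
  have "\<epsilon> < real k"
    unfolding k_def using \<open>0 \<le> \<epsilon>\<close> by linarith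
  then have "\<epsilon>\<^sup>2 < (real k)\<^sup>2"
    using \<open>0 \<le> \<epsilon>\<close> by (intro power_strict_mono) auto
  with n have r: "0 < r" "r < 1/2"
    by (auto simp: r_def divide_neg_pos)
  obtain T where T: "compact T" "T \<subseteq> B" "r < measure lborel T"
    using lebesgue_inner_compact[OF B(1,2), of r] r B(3) by auto
  have T_ne: "T \<noteq> {}"
    using T(3) r by auto
  have T_cube: "T \<subseteq> unit_cube"
    using T(2) B(2) by auto
  define D where "D = {x\<in>unit_cube. k \<le> hamming_infdist UNIV x T}"
  have D: "D \<in> sets borel"
    unfolding D_def using T(1) T_ne by (rule sets_hamming_infdist_ge)
  show thesis
  proof
    show "D \<in> sets lebesgue" "D \<subseteq> unit_cube"
      using D by (auto simp: D_def)
    have "r * measure lborel D \<le> measure lborel T * measure lborel D"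
      using T(3) by (intro mult_right_mono) auto
    also have "\<dots> \<le> exp (- (real k)\<^sup>2 / n)"
      unfolding D_def n_def by (rule measure_hamming_infdist_ge[OF T(1) T_cube T_ne])
    also have "\<dots> = r * (2 * exp (- \<epsilon>\<^sup>2 / n))"
      by (simp add: r_def exp_add[symmetric] diff_divide_distrib)
    finally show "measure lebesgue D \<le> 2 * exp (- \<epsilon>\<^sup>2 / CARD('n))"
      using r D by (simp add: n_def)
  next
    fix x assume "x \<in> unit_cube - D"
    then have "hamming_infdist UNIV x T < k"
      by (auto simp: D_def)
    moreover obtain y where "y \<in> T" "hamming_infdist UNIV x T = hamming x y"
      using hamming_infdist_attained[OF T_ne, of UNIV x] by (auto simp: hamming_on_UNIV)
    ultimately have "real (hamming x y) \<le> real (nat \<lfloor>\<epsilon>\<rfloor>)"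
      by (simp add: k_def)
    also have "\<dots> \<le> \<epsilon>"
      using \<open>0 \<le> \<epsilon>\<close> by linarith
    finally show "\<exists>y\<in>B. real (hamming x y) \<le> \<epsilon>"
      using \<open>y \<in> T\<close> T(2) by blast
  qed
qed

lemma bounded_prob_density_integral_diff_ge:
  assumes \<rho>: "bounded_prob_density_on_cube \<rho>"
    and D: "D \<in> sets lebesgue" "D \<subseteq> unit_cube" "measure lebesgue D \<le> m"
  shows "1 - m * (SUP x\<in>unit_cube. \<rho> x) \<le> (LINT x:unit_cube - D|lebesgue. \<rho> x)"
proof -
  define U where "U = (SUP x\<in>unit_cube. \<rho> x)"
  have nonneg: "\<And>x. x \<in> unit_cube \<Longrightarrow> 0 \<le> \<rho> x"
    and int: "set_integrable lebesgue unit_cube \<rho>"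
    and total: "(LINT x:unit_cube|lebesgue. \<rho> x) = 1"
    and bdd: "bdd_above (\<rho> ` unit_cube)"
    using \<rho> by (auto simp: bounded_prob_density_on_cube_def)
  have le_U: "\<rho> x \<le> U" if "x \<in> unit_cube" for x
    unfolding U_def using bdd that by (rule cSUP_upper2) simp
  have "0 \<le> U"
    using nonneg[of 0] le_U[of 0] by (simp add: unit_cube_def)
  have D_fin: "emeasure lebesgue D \<noteq> \<infinity>"
    using emeasure_mono[OF D(2), of lebesgue] by (auto simp: emeasure_unit_cube top_unique)
  have int_diff: "set_integrable lebesgue (unit_cube - D) \<rho>"
    using D(1) by (intro set_integrable_subset[OF int]) auto
  have int_D: "set_integrable lebesgue D \<rho>"
    using D(1,2) by (rule set_integrable_subset[OF int])
  have int_U: "set_integrable lebesgue D (\<lambda>_. U)"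
    unfolding set_integrable_def using D(1) D_fin
    by (intro integrable_scaleR_left integrable_real_indicator) (auto simp: less_top)
  have "1 = (LINT x:(unit_cube - D) \<union> D|lebesgue. \<rho> x)"
    using total D(2) by (simp add: Un_absorb2)
  also have "\<dots> = (LINT x:unit_cube - D|lebesgue. \<rho> x) + (LINT x:D|lebesgue. \<rho> x)"
    by (rule set_integral_Un[OF _ int_diff int_D]) auto
  also have "(LINT x:D|lebesgue. \<rho> x) \<le> (LINT x:D|lebesgue. U)"
    using int_D int_U by (rule set_integral_mono) (use le_U D(2) in auto)
  also have "\<dots> = measure lebesgue D * U"
    using D(1) D_fin by (simp add: set_integral_const)
  also have "\<dots> \<le> m * U"
    using D(3) \<open>0 \<le> U\<close> by (rule mult_right_mono)
  finally show ?thesis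
    by (simp add: U_def)
qed

theorem theorem3:
  fixes \<rho> :: "nat \<Rightarrow> real ^ 'n \<Rightarrow> real"
    and C :: "real ^ 'n \<Rightarrow> nat"
    and m c :: nat and \<epsilon> :: real
  assumes dens: "\<forall>k\<in>{1..m}. bounded_prob_density_on_cube (\<rho> k)"
    and C_range: "\<forall>x\<in>unit_cube. C x \<in> {1..m}"
    and C_meas: "\<forall>k\<in>{1..m}. {x\<in>unit_cube. C x = k} \<in> sets lebesgue"
    and c_in: "c \<in> {1..m}"
    and f_c: "measure lebesgue {x\<in>unit_cube. C x = c} \<le> 1/2"
    and eps: "\<epsilon> \<ge> 0"
  shows "\<exists>A \<in> sets lebesgue.
           A \<subseteq> {x\<in>unit_cube. C x \<noteq> c \<or>
                    (\<exists>xh\<in>unit_cube. C xh \<noteq> c \<and> real (hamming x xh) \<le> \<epsilon>)} \<and>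
           (LINT x:A|lebesgue. \<rho> c x)
             \<ge> 1 - 2 * (SUP x\<in>unit_cube. \<rho> c x) * exp (- (\<epsilon>\<^sup>2) / real CARD('n))"
proof -
  define B where "B = {x\<in>unit_cube. C x \<noteq> c}"
  have B_eq: "B = unit_cube - {x\<in>unit_cube. C x = c}"
    by (auto simp: B_def)
  have B_sets: "B \<in> sets lebesgue"
    using C_meas c_in by (auto simp: B_eq)
  have "measure lebesgue B = 1 - measure lebesgue {x\<in>unit_cube. C x = c}"
    using C_meas c_in unfolding B_eq
    by (subst measure_Diff) (auto simp: emeasure_unit_cube measure_def)
  then obtain D where D: "D \<in> sets lebesgue" "D \<subseteq> unit_cube"
    "measure lebesgue D \<le> 2 * exp (- \<epsilon>\<^sup>2 / CARD('n))"
    "\<And>x. x \<in> unit_cube - D \<Longrightarrow> \<exists>y\<in>B. real (hamming x y) \<le> \<epsilon>"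
    using hamming_blowup[OF B_sets _ _ eps] f_c by (auto simp: B_def)
  have "1 - 2 * exp (- \<epsilon>\<^sup>2 / CARD('n)) * (SUP x\<in>unit_cube. \<rho> c x) \<le> (LINT x:unit_cube - D|lebesgue. \<rho> c x)"
    using dens c_in D(1-3) by (intro bounded_prob_density_integral_diff_ge) auto
  moreover have "unit_cube - D \<subseteq> {x\<in>unit_cube. C x \<noteq> c \<or> (\<exists>xh\<in>unit_cube. C xh \<noteq> c \<and> real (hamming x xh) \<le> \<epsilon>)}"
    using D(4) by (fastforce simp: B_def)
  ultimately show ?thesis
    using D(1) by (intro bexI[of _ "unit_cube - D"]) (auto simp: mult_ac)
qed

end
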